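(* For every non-empty context $\Gamma$ and formula $A$: if the sequent $\Gamma\vdash A$ is derivable in the sequent calculus, then $\varphi(\Gamma)\le A$ in the Tamari order.
   Context: Formulas are built from atoms ($p,q,\dots$) by a binary product: every formula is an atom or $A\bullet B$ for formulas $A,B$. A context is a finite (possibly empty) list of formulas; commas denote concatenation. A sequent $\Gamma\vdash A$ is a context with a formula. The sequent calculus has exactly four rules (no weakening, contraction or exchange): ($\bullet L$) from $A,B,\Delta\vdash C$ infer $A\bullet B,\Delta\vdash C$ (the product must be the leftmost formula); ($\bullet R$) from $\Gamma\vdash A$ and $\Delta\vdash B$ infer $\Gamma,\Delta\vdash A\bullet B$; ($id$) $A\vdash A$; ($cut$) from $\Theta\vdash A$ and $\Gamma,A,\Delta\vdash B$ infer $\Gamma,\Theta,\Delta\vdash B$. A sequent is derivable if it is the conclusion of a finite derivation tree built from these rules with no undischarged premises. The Tamari order $\le$ on formulas is the least preorder such that $(A\bullet B)\bullet C\le A\bullet(B\bullet C)$ for all $A,B,C$, and $A_1\le A_2$, $B_1\le B_2$ imply $A_1\bullet B_1\le A_2\bullet B_2$. For a non-empty context, $\varphi$ is its left-associated product: $\varphi(A)=A$ and $\varphi(\Gamma,A)=\varphi(\Gamma)\bullet A$; so $\varphi(A_0,A_1,\dots,A_n)=(\cdots(A_0\bullet A_1)\bullet\cdots)\bullet A_n$. *)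

theory Defs
  imports Main
begin

datatype 'a formula = Atom 'a | Prod "'a formula" "'a formula" (infixl "\<bullet>" 70)

inductive derivable :: "'a formula list \<Rightarrow> 'a formula \<Rightarrow> bool" where
  prodL: "derivable (A # B # \<Delta>) C \<Longrightarrow> derivable ((A \<bullet> B) # \<Delta>) C"
| prodR: "derivable \<Gamma> A \<Longrightarrow> derivable \<Delta> B \<Longrightarrow> derivable (\<Gamma> @ \<Delta>) (A \<bullet> B)"
| ident: "derivable [A] A"
| cut: "derivable \<Theta> A \<Longrightarrow> derivable (\<Gamma> @ [A] @ \<Delta>) B \<Longrightarrow> derivable (\<Gamma> @ \<Theta> @ \<Delta>) B"

inductive tamari :: "'a formula \<Rightarrow> 'a formula \<Rightarrow> bool" where
  refl: "tamari A A"
| trans: "tamari A B \<Longrightarrow> tamari B C \<Longrightarrow> tamari A C"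
| assoc: "tamari ((A \<bullet> B) \<bullet> C) (A \<bullet> (B \<bullet> C))"
| mono: "tamari A1 A2 \<Longrightarrow> tamari B1 B2 \<Longrightarrow> tamari (A1 \<bullet> B1) (A2 \<bullet> B2)"

fun phi :: "'a formula list \<Rightarrow> 'a formula" where
  "phi (A # \<Gamma>) = foldl (\<lambda>X Y. X \<bullet> Y) A \<Gamma>"
| "phi [] = undefined"

end

theory Submission
  imports Defs
begin

text \<open>Two facts make every rule sound for the reading \<open>\<phi>(\<Gamma>) \<le> A\<close>: the left-associated
product of a concatenation \<open>\<Gamma>, \<Delta>\<close> reassociates upward to \<open>\<phi>(\<Gamma>) \<bullet> \<phi>(\<Delta>)\<close> (this handles
\<open>\<bullet>R\<close>), and \<open>\<phi>\<close> is monotone in any block of the context (this handles cut, which replaces a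
formula \<open>A\<close> by a context \<open>\<Theta>\<close> with \<open>\<phi>(\<Theta>) \<le> A\<close>). The rule \<open>\<bullet>L\<close> leaves \<open>\<phi>\<close> unchanged.\<close>

declare tamari.trans [trans]

abbreviation lprod :: "'a formula \<Rightarrow> 'a formula list \<Rightarrow> 'a formula" where
  "lprod \<equiv> foldl (\<lambda>X Y. X \<bullet> Y)"

lemma phi_append: "\<Gamma> \<noteq> [] \<Longrightarrow> phi (\<Gamma> @ \<Delta>) = lprod (phi \<Gamma>) \<Delta>"
  by (cases \<Gamma>) auto

lemma tamari_lprod_mono: "tamari X Y \<Longrightarrow> tamari (lprod X \<Delta>) (lprod Y \<Delta>)"
  by (induction \<Delta> arbitrary: X Y) (auto intro: tamari.mono tamari.refl)

lemma tamari_lprod_Cons: "tamari (lprod X (D # Ds)) (X \<bullet> lprod D Ds)"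
proof (induction Ds rule: rev_induct)
  case Nil
  show ?case by (simp add: tamari.refl)
next
  case (snoc E Ds)
  then have "tamari (lprod X (D # Ds) \<bullet> E) ((X \<bullet> lprod D Ds) \<bullet> E)"
    by (auto intro: tamari.mono tamari.refl)
  also have "tamari \<dots> (X \<bullet> (lprod D Ds \<bullet> E))"
    by (rule tamari.assoc)
  finally show ?case by simp
qed

lemma tamari_phi_append:
  assumes "\<Gamma> \<noteq> []" and "\<Delta> \<noteq> []"
  shows "tamari (phi (\<Gamma> @ \<Delta>)) (phi \<Gamma> \<bullet> phi \<Delta>)"
  using assms tamari_lprod_Cons[of "phi \<Gamma>"]
  by (cases \<Delta>) (auto simp: phi_append simp del: foldl_Cons)

lemma tamari_phi_append_left_mono:
  assumes "\<Gamma> \<noteq> []" and "\<Gamma>' \<noteq> []" and "tamari (phi \<Gamma>) (phi \<Gamma>')"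
  shows "tamari (phi (\<Gamma> @ \<Delta>)) (phi (\<Gamma>' @ \<Delta>))"
  using assms by (simp add: phi_append tamari_lprod_mono)

lemma tamari_phi_append_right_mono:
  assumes "\<Theta> \<noteq> []" and "tamari (phi \<Theta>) A"
  shows "tamari (phi (\<Gamma> @ \<Theta>)) (phi (\<Gamma> @ [A]))"
proof (cases "\<Gamma> = []")
  case True
  with assms show ?thesis by simp
next
  case False
  with assms have "tamari (phi (\<Gamma> @ \<Theta>)) (phi \<Gamma> \<bullet> phi \<Theta>)"
    by (simp add: tamari_phi_append)
  also have "tamari \<dots> (phi \<Gamma> \<bullet> A)"
    using assms by (simp add: tamari.mono tamari.refl)
  finally show ?thesis
    using False by (simp add: phi_append)
qed

lemma derivable_nonempty: "derivable \<Gamma> A \<Longrightarrow> \<Gamma> \<noteq> []"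
  by (induction rule: derivable.induct) auto

lemma derivable_imp_tamari: "derivable \<Gamma> A \<Longrightarrow> tamari (phi \<Gamma>) A"
proof (induction rule: derivable.induct)
  case (prodL A B \<Delta> C)
  then show ?case by simp
next
  case (prodR \<Gamma> A \<Delta> B)
  then have "tamari (phi (\<Gamma> @ \<Delta>)) (phi \<Gamma> \<bullet> phi \<Delta>)"
    by (simp add: tamari_phi_append derivable_nonempty)
  also have "tamari \<dots> (A \<bullet> B)"
    using prodR.IH by (rule tamari.mono)
  finally show ?case .
next
  case (ident A)
  show ?case by (simp add: tamari.refl)
next
  case (cut \<Theta> A \<Gamma> \<Delta> B)
  have "tamari (phi ((\<Gamma> @ \<Theta>) @ \<Delta>)) (phi ((\<Gamma> @ [A]) @ \<Delta>))"
    using cut by (intro tamari_phi_append_left_mono tamari_phi_append_right_mono)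
      (auto dest: derivable_nonempty)
  also have "tamari \<dots> B"
    using cut.IH(2) by simp
  finally show ?case by simp
qed

theorem theorem1p6:
  fixes \<Gamma> :: "'a formula list" and A :: "'a formula"
  assumes "\<Gamma> \<noteq> []" and "derivable \<Gamma> A"
  shows "tamari (phi \<Gamma>) A"
  using assms(2) by (rule derivable_imp_tamari)

end
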